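(* Let $(E,\rho)$ be a weighted space and $(\psi_t)_{t\ge0}$ a family of maps $E\to E$, and set $P(t)f:=f\circ\psi_t$. Then $(P(t))_{t\ge0}$ is a generalized Feller semigroup on $\mathscr{B}^\rho(E)$ if and only if: (i) $\psi_0=\mathrm{Id}$; (ii) $\psi_{t_1}\circ\psi_{t_2}=\psi_{t_1+t_2}$ for all $t_1,t_2\ge0$; (iii) $\lim_{t\downarrow0}\psi_t(x)=x$ for all $x\in E$; (iv) for all $t\ge0$ and $R>0$ the restriction $\psi_t|_{K_R}:K_R\to E$ is continuous; (v) $C_t:=\sup_{x\in E}\rho(\psi_t(x))/\rho(x)<\infty$ for all $t\ge0$; (vi) there exist $\delta>0$ and $C>0$ with $C_t<C$ for all $0\le t<\delta$. Moreover, for such a generalized Feller semigroup, for all $t\ge0$ and $x\in E$, $$\sup\{|f(\psi_t(x))|: f\in C_b(E),\ |f|\le\rho\}=\rho(\psi_t(x)).$$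
   Context: A weighted space is a pair $(E,\rho)$ where $E$ is a completely regular Hausdorff topological space and $\rho:E\to(0,\infty)$ is an admissible weight function, meaning that for every $R\ge 0$ the sublevel set $K_R:=\{x\in E:\rho(x)\le R\}$ is compact. For $f:E\to\mathbb{R}$ put $\|f\|_\rho:=\sup_{x\in E}|f(x)|/\rho(x)$; $\mathscr{B}^\rho(E)$ denotes the closure of $C_b(E)$ with respect to $\|\cdot\|_\rho$ inside $\{f:E\to\mathbb{R}:\|f\|_\rho<\infty\}$. A generalized Feller semigroup on $\mathscr{B}^\rho(E)$ is a family $(P(t))_{t\ge0}$ of bounded linear operators on $\mathscr{B}^\rho(E)$ such that (P1) $P(0)=\mathrm{Id}$; (P2) $P(t+s)=P(s)P(t)$ for all $s,t\ge0$; (P3) $\lim_{t\downarrow0}P(t)f(x)=f(x)$ for all $f\in\mathscr{B}^\rho(E)$, $x\in E$; (P4) there exist $\varepsilon>0$, $C<\infty$ with $\|P(t)\|_{L(\mathscr{B}^\rho(E))}\le C$ for all $t\in[0,\varepsilon]$; (P5) each $P(t)$ is a positive operator. *)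

theory Defs
  imports "HOL-Analysis.Analysis"
begin

text \<open>The space E is the whole of a type 'a with its (class) topology;
  complete regularity and the Hausdorff property are stated as assumptions.\<close>

definition admissible_weight :: "('a::topological_space \<Rightarrow> real) \<Rightarrow> bool" where
  "admissible_weight \<rho> \<longleftrightarrow> (\<forall>x. \<rho> x > 0) \<and> (\<forall>R\<ge>0. compact {x. \<rho> x \<le> R})"

definition Cb :: "('a::topological_space \<Rightarrow> real) set" where
  "Cb = {f. continuous_on UNIV f \<and> bounded (range f)}"

definition wnorm :: "('a \<Rightarrow> real) \<Rightarrow> ('a \<Rightarrow> real) \<Rightarrow> real" where
  "wnorm \<rho> f = (SUP x. \<bar>f x\<bar> / \<rho> x)"

text \<open>B^rho(E): closure of C_b(E) w.r.t. the weighted norm inside the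
  functions of finite weighted norm.\<close>
definition Brho :: "('a::topological_space \<Rightarrow> real) \<Rightarrow> ('a \<Rightarrow> real) set" where
  "Brho \<rho> = {f. (\<exists>M. \<forall>x. \<bar>f x\<bar> \<le> M * \<rho> x) \<and>
      (\<forall>\<epsilon>>0. \<exists>g\<in>Cb. \<forall>x. \<bar>f x - g x\<bar> \<le> \<epsilon> * \<rho> x)}"

text \<open>Generalized Feller semigroup on B^rho(E); P t is only relevant for t \<ge> 0.\<close>
definition gen_feller :: "('a::topological_space \<Rightarrow> real) \<Rightarrow> (real \<Rightarrow> ('a \<Rightarrow> real) \<Rightarrow> ('a \<Rightarrow> real)) \<Rightarrow> bool" where
  "gen_feller \<rho> P \<longleftrightarrow>
     \<comment> \<open>each P(t) is a bounded linear operator on B^rho(E)\<close>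
     (\<forall>t\<ge>0. \<forall>f\<in>Brho \<rho>. P t f \<in> Brho \<rho>) \<and>
     (\<forall>t\<ge>0. \<forall>f\<in>Brho \<rho>. \<forall>g\<in>Brho \<rho>. \<forall>a b::real.
         P t (\<lambda>x. a * f x + b * g x) = (\<lambda>x. a * P t f x + b * P t g x)) \<and>
     (\<forall>t\<ge>0. \<exists>M. \<forall>f\<in>Brho \<rho>. wnorm \<rho> (P t f) \<le> M * wnorm \<rho> f) \<and>
     \<comment> \<open>(P1)\<close>
     (\<forall>f\<in>Brho \<rho>. P 0 f = f) \<and>
     \<comment> \<open>(P2)\<close>
     (\<forall>s\<ge>0. \<forall>t\<ge>0. \<forall>f\<in>Brho \<rho>. P (t + s) f = P s (P t f)) \<and>
     \<comment> \<open>(P3)\<close>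
     (\<forall>f\<in>Brho \<rho>. \<forall>x. ((\<lambda>t. P t f x) \<longlongrightarrow> f x) (at_right 0)) \<and>
     \<comment> \<open>(P4)\<close>
     (\<exists>\<epsilon>>0. \<exists>C. \<forall>t\<in>{0..\<epsilon>}. \<forall>f\<in>Brho \<rho>. wnorm \<rho> (P t f) \<le> C * wnorm \<rho> f) \<and>
     \<comment> \<open>(P5)\<close>
     (\<forall>t\<ge>0. \<forall>f\<in>Brho \<rho>. (\<forall>x. f x \<ge> 0) \<longrightarrow> (\<forall>x. P t f x \<ge> 0))"

definition Cconst :: "('a \<Rightarrow> real) \<Rightarrow> (real \<Rightarrow> 'a \<Rightarrow> 'a) \<Rightarrow> real \<Rightarrow> real" where
  "Cconst \<rho> \<psi> t = (SUP x. \<rho> (\<psi> t x) / \<rho> x)"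

end

theory Submission
  imports Defs
begin

text \<open>Complete regularity gives Urysohn functions in \<open>C\<^sub>b(E)\<close> separating points from
  closed sets, so every property of the operators \<open>f \<mapsto> f \<circ> \<psi>\<^sub>t\<close> tested on \<open>C\<^sub>b(E)\<close> passes
  to the maps \<open>\<psi>\<^sub>t\<close>. Cutting such functions off at a height \<open>c < \<rho>(y)\<close> shows that \<open>\<rho>\<close> is
  the pointwise supremum of the \<open>f \<in> C\<^sub>b(E)\<close> with \<open>|f| \<le> \<rho>\<close>; evaluated at \<open>\<psi>\<^sub>t(x)\<close> this
  bounds \<open>C\<^sub>t\<close> by the operator norm of \<open>P(t)\<close>. Conversely, elements of \<open>\<B>\<^sup>\<rho>(E)\<close> are
  continuous on the compact sublevel sets \<open>K\<^sub>R\<close>, and a bounded function continuous on every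
  \<open>K\<^sub>R\<close> is approximated in weighted norm by a Tietze extension from a large \<open>K\<^sub>R\<close>; this
  keeps \<open>f \<circ> \<psi>\<^sub>t\<close> in \<open>\<B>\<^sup>\<rho>(E)\<close>.\<close>

lemma Cb_bounded: "f \<in> Cb \<Longrightarrow> \<exists>B. \<forall>x. \<bar>f x\<bar> \<le> B"
  unfolding Cb_def by (auto simp: bounded_iff)

lemma Cb_continuous: "f \<in> Cb \<Longrightarrow> continuous_on S f"
  unfolding Cb_def using continuous_on_subset by blast

lemma Cb_if_continuous_range_le:
  assumes "continuous_on UNIV f" and "\<And>x. \<bar>f x\<bar> \<le> B"
  shows "f \<in> Cb"
  using assms unfolding Cb_def by (auto intro!: boundedI[of _ B])

locale weighted_space =
  fixes \<rho> :: "'a::topological_space \<Rightarrow> real"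
  assumes completely_regular: "completely_regular_space (euclidean :: 'a topology)"
    and Hausdorff: "Hausdorff_space (euclidean :: 'a topology)"
    and admissible: "admissible_weight \<rho>"
begin

lemma weight_pos: "\<rho> x > 0"
  using admissible by (simp add: admissible_weight_def)

lemma compact_sublevel: "R \<ge> 0 \<Longrightarrow> compact {x. \<rho> x \<le> R}"
  using admissible by (simp add: admissible_weight_def)

lemma open_superlevel:
  assumes "c \<ge> 0"
  shows "open {x. \<rho> x > c}"
proof -
  have "closedin euclidean {x. \<rho> x \<le> c}"
    using compactin_imp_closedin[OF Hausdorff] compact_sublevel[OF assms] by simp
  moreover have "{x. \<rho> x > c} = - {x. \<rho> x \<le> c}" by auto
  ultimately show ?thesis by (simp add: open_closed)
qed

text \<open>The open sets \<open>{\<rho> > 1/(n+1)}\<close> increase and cover the compact set \<open>K\<^sub>1\<close>.\<close>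

lemma weight_bounded_below: "\<exists>m>0. \<forall>x. m \<le> \<rho> x"
proof -
  define U where "U n = {x. \<rho> x > 1 / real (Suc n)}" for n
  have "{x. \<rho> x \<le> 1} \<subseteq> (\<Union>n. U n)"
  proof
    fix x
    obtain n where "1 / real (Suc n) < \<rho> x"
      using weight_pos[of x] by (metis nat_approx_posE)
    then show "x \<in> (\<Union>n. U n)" by (auto simp: U_def)
  qed
  moreover have "open (U n)" for n
    unfolding U_def by (rule open_superlevel) simp
  ultimately obtain J where J: "finite J" "{x. \<rho> x \<le> 1} \<subseteq> (\<Union>n\<in>J. U n)"
    using compactE_image[OF compact_sublevel[of 1], of UNIV U] by auto
  obtain k where k: "J \<subseteq> {..<k}"
    using finite_nat_bounded[OF J(1)] by blast
  have "1 / real (Suc k) \<le> \<rho> x" for x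
  proof (cases "\<rho> x \<le> 1")
    case True
    then obtain n where "n \<in> J" "\<rho> x > 1 / real (Suc n)"
      using J(2) by (auto simp: U_def)
    moreover have "1 / real (Suc k) \<le> 1 / real (Suc n)"
      using k \<open>n \<in> J\<close> by (auto simp: divide_simps)
    ultimately show ?thesis by linarith
  next
    case False
    have "1 / real (Suc k) \<le> 1" by (simp add: divide_simps)
    with False show ?thesis by linarith
  qed
  then show ?thesis by (intro exI[of _ "1 / real (Suc k)"]) auto
qed

lemma Cb_subset_Brho: "Cb \<subseteq> Brho \<rho>"
proof
  fix f :: "'a \<Rightarrow> real"
  assume f: "f \<in> Cb"
  obtain B where B: "\<And>x. \<bar>f x\<bar> \<le> B" using Cb_bounded[OF f] by blast
  obtain m where m: "m > 0" "\<And>x. m \<le> \<rho> x" using weight_bounded_below by blast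
  have "\<bar>f x\<bar> \<le> B / m * \<rho> x" for x
  proof -
    have "\<bar>f x\<bar> \<le> B / m * m" using B[of x] m by simp
    also have "\<dots> \<le> B / m * \<rho> x"
      using m B[of x] by (intro mult_left_mono) auto
    finally show ?thesis .
  qed
  moreover have "\<bar>f x - f x\<bar> \<le> e * \<rho> x" if "e > 0" for e x
    using that weight_pos[of x] by simp
  ultimately show "f \<in> Brho \<rho>"
    unfolding Brho_def using f by blast
qed

lemma Brho_weighted_bound:
  assumes "f \<in> Brho \<rho>"
  shows "\<exists>M\<ge>0. \<forall>x. \<bar>f x\<bar> \<le> M * \<rho> x"
proof -
  obtain M where M: "\<And>x. \<bar>f x\<bar> \<le> M * \<rho> x"
    using assms unfolding Brho_def by blast
  have "0 \<le> M * \<rho> x" for x using M[of x] by linarith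
  then have "M \<ge> 0" using weight_pos by (meson zero_le_mult_iff not_less)
  with M show ?thesis by blast
qed

lemma wnorm_upper:
  assumes "f \<in> Brho \<rho>"
  shows "\<bar>f x\<bar> / \<rho> x \<le> wnorm \<rho> f"
proof -
  obtain M where M: "\<And>x. \<bar>f x\<bar> \<le> M * \<rho> x"
    using Brho_weighted_bound[OF assms] by blast
  have "bdd_above (range (\<lambda>x. \<bar>f x\<bar> / \<rho> x))"
    using M weight_pos by (intro bdd_aboveI[of _ M]) (auto simp: divide_simps)
  then show ?thesis
    unfolding wnorm_def by (rule cSUP_upper[OF UNIV_I])
qed

lemma wnorm_nonneg: "f \<in> Brho \<rho> \<Longrightarrow> 0 \<le> wnorm \<rho> f"
  using wnorm_upper[of f undefined] weight_pos[of undefined]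
  by (meson abs_ge_zero divide_nonneg_pos order_trans)

lemma wnorm_least: "(\<And>x. \<bar>f x\<bar> / \<rho> x \<le> C) \<Longrightarrow> wnorm \<rho> f \<le> C"
  unfolding wnorm_def by (rule cSUP_least) auto

lemma Brho_continuous_on_sublevel:
  assumes "f \<in> Brho \<rho>"
  shows "continuous_on {x. \<rho> x \<le> R} f"
  unfolding continuous_on_def
proof (intro ballI tendstoI)
  fix x and e :: real
  assume x: "x \<in> {x. \<rho> x \<le> R}" and e: "0 < e"
  define R' where "R' = max R 1"
  have R': "R' > 0" "R \<le> R'" by (auto simp: R'_def)
  then have "e / 3 / R' > 0" using e by simp
  then obtain g where g: "g \<in> Cb" "\<And>y. \<bar>f y - g y\<bar> \<le> e / 3 / R' * \<rho> y"
    using assms unfolding Brho_def by blast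
  have close: "\<bar>f y - g y\<bar> \<le> e / 3" if "\<rho> y \<le> R" for y
  proof -
    have "\<bar>f y - g y\<bar> \<le> e / 3 / R' * \<rho> y" by (rule g(2))
    also have "\<dots> \<le> e / 3 / R' * R'"
      using that R' e by (intro mult_left_mono) auto
    finally show ?thesis using R' by simp
  qed
  have "(g \<longlongrightarrow> g x) (at x within {x. \<rho> x \<le> R})"
    using Cb_continuous[OF g(1)] x unfolding continuous_on_def by blast
  then have "\<forall>\<^sub>F y in at x within {x. \<rho> x \<le> R}. dist (g y) (g x) < e / 3"
    using e by (intro tendstoD) auto
  moreover have "\<forall>\<^sub>F y in at x within {x. \<rho> x \<le> R}. \<rho> y \<le> R"
    by (simp add: eventually_at_filter)
  ultimately show "\<forall>\<^sub>F y in at x within {x. \<rho> x \<le> R}. dist (f y) (f x) < e"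
  proof eventually_elim
    case (elim y)
    then have "\<bar>g y - g x\<bar> < e / 3" "\<bar>f y - g y\<bar> \<le> e / 3"
      using close by (auto simp: dist_real_def)
    moreover have "\<bar>f x - g x\<bar> \<le> e / 3" using close x by simp
    ultimately show ?case
      unfolding dist_real_def by linarith
  qed
qed

lemma Cb_Urysohn:
  fixes U :: "'a set"
  assumes "open U" "x \<in> U"
  obtains f where "f \<in> Cb" "f x = 0" "\<And>y. y \<notin> U \<Longrightarrow> f y = 1" "\<And>y. 0 \<le> f y \<and> f y \<le> 1"
proof -
  have "closedin euclidean (- U)" "x \<in> topspace euclidean - (- U)"
    using assms by (simp_all add: closed_open)
  then obtain f :: "'a \<Rightarrow> real" where f: "continuous_map euclidean (top_of_set {0..1}) f"
    "f x = 0" "f ` (- U) \<subseteq> {1}"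
    using completely_regular unfolding completely_regular_space_def by blast
  then have "continuous_on UNIV f" "\<And>y. f y \<in> {0..1}"
    by (auto simp: continuous_map_in_subtopology)
  then have "f \<in> Cb" by (intro Cb_if_continuous_range_le[of f 1]) auto
  then show ?thesis using that f \<open>\<And>y. f y \<in> {0..1}\<close> by auto
qed

lemma eq_if_Cb_comp_eq:
  fixes \<phi> \<phi>' :: "'b \<Rightarrow> 'a"
  assumes "\<And>f. f \<in> Cb \<Longrightarrow> f \<circ> \<phi> = f \<circ> \<phi>'"
  shows "\<phi> = \<phi>'"
proof
  fix x
  show "\<phi> x = \<phi>' x"
  proof (rule ccontr)
    assume ne: "\<phi> x \<noteq> \<phi>' x"
    have "t1_space (euclidean :: 'a topology)"
      by (rule Hausdorff_imp_t1_space[OF Hausdorff])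
    then have "closedin euclidean {\<phi>' x}"
      by (rule closedin_t1_singleton) simp
    then have "open (- {\<phi>' x})" by (simp add: open_closed)
    moreover have "\<phi> x \<in> - {\<phi>' x}" using ne by simp
    ultimately obtain f where f: "f \<in> Cb" "f (\<phi> x) = 0" "\<And>y. y \<notin> - {\<phi>' x} \<Longrightarrow> f y = 1"
      by (rule Cb_Urysohn) auto
    then have "(f \<circ> \<phi>) x \<noteq> (f \<circ> \<phi>') x" by simp
    with assms[OF f(1)] show False by simp
  qed
qed

lemma tendsto_if_Cb_comp_tendsto:
  fixes g :: "'b \<Rightarrow> 'a"
  assumes "\<And>f. f \<in> Cb \<Longrightarrow> ((\<lambda>t. f (g t)) \<longlongrightarrow> f x) F"
  shows "(g \<longlongrightarrow> x) F"
proof (rule topological_tendstoI)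
  fix U assume U: "open U" "x \<in> U"
  obtain f where f: "f \<in> Cb" "f x = 0" "\<And>y. y \<notin> U \<Longrightarrow> f y = 1"
    using U by (rule Cb_Urysohn) auto
  have "((\<lambda>t. f (g t)) \<longlongrightarrow> 0) F"
    using assms[OF f(1)] f(2) by simp
  then have "\<forall>\<^sub>F t in F. dist (f (g t)) 0 < 1"
    by (rule tendstoD) simp
  then show "\<forall>\<^sub>F t in F. g t \<in> U"
  proof eventually_elim
    case (elim t)
    then show ?case using f(3)[of "g t"] by (cases "g t \<in> U") auto
  qed
qed

lemma continuous_on_if_Cb_comp_continuous_on:
  fixes \<phi> :: "'b::topological_space \<Rightarrow> 'a"
  assumes "\<And>f. f \<in> Cb \<Longrightarrow> continuous_on S (f \<circ> \<phi>)"
  shows "continuous_on S \<phi>"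
  unfolding continuous_on_def
proof (intro ballI)
  fix x assume "x \<in> S"
  show "(\<phi> \<longlongrightarrow> \<phi> x) (at x within S)"
    by (rule tendsto_if_Cb_comp_tendsto)
      (use assms \<open>x \<in> S\<close> in \<open>auto simp: continuous_on_def\<close>)
qed

text \<open>The cut-off \<open>c (1 - g)\<close> of an Urysohn function \<open>g\<close> for \<open>y\<close> and the open set
  \<open>{\<rho> > c}\<close> stays below \<open>\<rho>\<close>, since it vanishes where \<open>\<rho> \<le> c\<close>.\<close>

lemma Cb_dominated_value:
  assumes "0 < c" "c < \<rho> y"
  obtains f where "f \<in> Cb" "\<And>z. \<bar>f z\<bar> \<le> \<rho> z" "f y = c"
proof -
  obtain g where g: "g \<in> Cb" "g y = 0" "\<And>z. \<not> \<rho> z > c \<Longrightarrow> g z = 1"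
    "\<And>z. 0 \<le> g z \<and> g z \<le> 1"
    using Cb_Urysohn[of "{x. \<rho> x > c}" y] open_superlevel assms by auto
  define f where "f z = c * (1 - g z)" for z
  have f_range: "0 \<le> f z \<and> f z \<le> c" for z
    using g(4)[of z] assms unfolding f_def by (simp add: mult_le_cancel_left1)
  have "continuous_on UNIV f"
    unfolding f_def by (intro continuous_intros Cb_continuous[OF g(1)])
  then have "f \<in> Cb"
    using f_range by (intro Cb_if_continuous_range_le[of f c]) auto
  moreover have "\<bar>f z\<bar> \<le> \<rho> z" for z
    using f_range[of z] g(3)[of z] weight_pos[of z] by (cases "\<rho> z > c") (auto simp: f_def)
  ultimately show ?thesis using that g(2) by (simp add: f_def)
qed

lemma SUP_dominated_Cb: "(SUP f\<in>{f\<in>Cb. \<forall>y. \<bar>f y\<bar> \<le> \<rho> y}. \<bar>f z\<bar>) = \<rho> z"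
proof (rule antisym)
  let ?D = "{f\<in>Cb. \<forall>y. \<bar>f y\<bar> \<le> \<rho> y}"
  have "(\<lambda>_. 0) \<in> ?D"
    using weight_pos by (auto simp: Cb_def less_imp_le)
  then show "(SUP f\<in>?D. \<bar>f z\<bar>) \<le> \<rho> z"
    by (intro cSUP_least) auto
  have bdd: "bdd_above ((\<lambda>f. \<bar>f z\<bar>) ` ?D)"
    by (intro bdd_aboveI[of _ "\<rho> z"]) auto
  show "\<rho> z \<le> (SUP f\<in>?D. \<bar>f z\<bar>)"
  proof (rule dense_le_bounded[of 0])
    show "0 < \<rho> z" by (rule weight_pos)
  next
    fix c assume c: "0 < c" "c < \<rho> z"
    then obtain f where "f \<in> Cb" "\<And>y. \<bar>f y\<bar> \<le> \<rho> y" "f z = c"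
      using Cb_dominated_value by blast
    then have "f \<in> ?D" "f z = c" by auto
    then show "c \<le> (SUP f\<in>?D. \<bar>f z\<bar>)"
      using cSUP_upper[OF _ bdd, of f] c by auto
  qed
qed

text \<open>Off a sublevel set \<open>K\<^sub>R\<close> with \<open>R \<ge> 2B/e\<close>, any two functions bounded by \<open>B\<close> are
  already \<open>e \<rho>\<close>-close, so it suffices to extend \<open>h|\<^bsub>K\<^sub>R\<^esub>\<close> by Tietze.\<close>

lemma Cb_weighted_approx:
  assumes B: "\<And>x. \<bar>h x\<bar> \<le> B"
    and cont: "\<And>R. R > 0 \<Longrightarrow> continuous_on {x. \<rho> x \<le> R} h"
    and e: "e > 0"
  obtains g where "g \<in> Cb" "\<And>x. \<bar>h x - g x\<bar> \<le> e * \<rho> x"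
proof -
  have B0: "B \<ge> 0" using B[of undefined] by linarith
  define R where "R = 2 * B / e + 1"
  have R: "R > 0" using B0 e by (simp add: R_def add_nonneg_pos)
  have "compactin euclidean {x. \<rho> x \<le> R}"
    using compact_sublevel R by simp
  moreover have "{-B..B} \<noteq> {}" using B0 by simp
  moreover have "continuous_map (top_of_set {x. \<rho> x \<le> R}) euclidean h"
    using cont[OF R] by simp
  moreover have "h ` {x. \<rho> x \<le> R} \<subseteq> {-B..B}"
  proof (rule image_subsetI)
    fix x show "h x \<in> {-B..B}" using B[of x] by (simp add: abs_le_iff)
  qed
  ultimately obtain g where g: "continuous_map euclidean euclideanreal g"
    "g ` topspace euclidean \<subseteq> {-B..B}" "\<And>x. x \<in> {x. \<rho> x \<le> R} \<Longrightarrow> g x = h x"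
    by (rule Tietze_extension_completely_regular[OF completely_regular _ is_interval_cc]) blast
  have g_bound: "\<bar>g x\<bar> \<le> B" for x
  proof -
    have "g x \<in> {-B..B}" using g(2) by (auto simp: image_subset_iff)
    then show ?thesis by (simp add: abs_le_iff)
  qed
  then have "g \<in> Cb"
    using g(1) by (intro Cb_if_continuous_range_le[of g B]) auto
  moreover have "\<bar>h x - g x\<bar> \<le> e * \<rho> x" for x
  proof (cases "\<rho> x \<le> R")
    case True
    then show ?thesis using g(3)[of x] e weight_pos[of x] by simp
  next
    case False
    have "\<bar>h x - g x\<bar> \<le> 2 * B" using B[of x] g_bound[of x] by linarith
    also have "\<dots> \<le> e * R" using e by (simp add: R_def distrib_left)
    also have "\<dots> \<le> e * \<rho> x" using False e by simp
    finally show ?thesis .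
  qed
  ultimately show ?thesis by (rule that)
qed

lemma Brho_comp:
  assumes cont: "\<And>R. R > 0 \<Longrightarrow> continuous_on {x. \<rho> x \<le> R} \<phi>"
    and growth: "\<And>x. \<rho> (\<phi> x) \<le> K * \<rho> x"
    and f: "f \<in> Brho \<rho>"
  shows "f \<circ> \<phi> \<in> Brho \<rho>"
proof -
  have "0 < K * \<rho> x" for x
    using weight_pos[of "\<phi> x"] growth[of x] by linarith
  then have K: "K > 0"
    using weight_pos by (metis zero_less_mult_pos2)
  obtain M where M: "M \<ge> 0" "\<And>x. \<bar>f x\<bar> \<le> M * \<rho> x"
    using Brho_weighted_bound[OF f] by blast
  have "\<bar>f (\<phi> x)\<bar> \<le> M * K * \<rho> x" for x
    using M(2)[of "\<phi> x"] mult_left_mono[OF growth[of x] M(1)] by simp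
  moreover have "\<exists>g\<in>Cb. \<forall>x. \<bar>f (\<phi> x) - g x\<bar> \<le> e * \<rho> x" if e: "e > 0" for e
  proof -
    have "e / 2 / K > 0" using e K by simp
    then obtain h where h: "h \<in> Cb" "\<And>x. \<bar>f x - h x\<bar> \<le> e / 2 / K * \<rho> x"
      using f unfolding Brho_def by blast
    obtain B where B: "\<And>x. \<bar>h x\<bar> \<le> B" using Cb_bounded[OF h(1)] by blast
    have h_cont: "continuous_on {x. \<rho> x \<le> R} (h \<circ> \<phi>)" if "R > 0" for R
      using cont[OF that] Cb_continuous[OF h(1)] by (rule continuous_on_compose)
    obtain g where g: "g \<in> Cb" "\<And>x. \<bar>(h \<circ> \<phi>) x - g x\<bar> \<le> e / 2 * \<rho> x"
      by (rule Cb_weighted_approx[OF _ h_cont, of B "e / 2"]) (use B e in auto)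
    have "\<bar>f (\<phi> x) - g x\<bar> \<le> e * \<rho> x" for x
    proof -
      have "\<bar>f (\<phi> x) - h (\<phi> x)\<bar> \<le> e / 2 / K * \<rho> (\<phi> x)" by (rule h(2))
      also have "\<dots> \<le> e / 2 / K * (K * \<rho> x)"
        using growth[of x] \<open>e / 2 / K > 0\<close> by (intro mult_left_mono) auto
      also have "\<dots> = e / 2 * \<rho> x" using K by simp
      finally have "\<bar>f (\<phi> x) - h (\<phi> x)\<bar> \<le> e / 2 * \<rho> x" .
      moreover have "\<bar>h (\<phi> x) - g x\<bar> \<le> e / 2 * \<rho> x" using g(2)[of x] by simp
      ultimately show ?thesis by linarith
    qed
    with g(1) show ?thesis by blast
  qed
  ultimately show ?thesis
    unfolding Brho_def comp_apply by blast
qed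

lemma wnorm_comp_le:
  assumes growth: "\<And>x. \<rho> (\<phi> x) \<le> K * \<rho> x" and f: "f \<in> Brho \<rho>"
  shows "wnorm \<rho> (f \<circ> \<phi>) \<le> K * wnorm \<rho> f"
proof (rule wnorm_least)
  fix x
  have "\<bar>(f \<circ> \<phi>) x\<bar> / \<rho> x = \<bar>f (\<phi> x)\<bar> / \<rho> (\<phi> x) * (\<rho> (\<phi> x) / \<rho> x)"
    using weight_pos[of "\<phi> x"] by simp
  also have "\<dots> \<le> wnorm \<rho> f * K"
    using growth[of x] weight_pos[of x] weight_pos[of "\<phi> x"]
    by (intro mult_mono wnorm_upper[OF f] wnorm_nonneg[OF f]) (auto simp: divide_simps)
  finally show "\<bar>(f \<circ> \<phi>) x\<bar> / \<rho> x \<le> K * wnorm \<rho> f" by (simp add: mult.commute)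
qed

text \<open>Test \<open>f \<circ> \<phi>\<close> at \<open>x\<close> with a function \<open>f\<close> of weighted norm at most one taking a value
  \<open>c\<close> strictly between \<open>K \<rho>(x)\<close> and \<open>\<rho>(\<phi> x)\<close> at \<open>\<phi> x\<close>.\<close>

lemma weight_comp_le_of_bounded_comp:
  assumes closed: "\<And>f. f \<in> Brho \<rho> \<Longrightarrow> f \<circ> \<phi> \<in> Brho \<rho>"
    and bounded: "\<And>f. f \<in> Brho \<rho> \<Longrightarrow> wnorm \<rho> (f \<circ> \<phi>) \<le> M * wnorm \<rho> f"
  shows "\<rho> (\<phi> x) \<le> max M 0 * \<rho> x"
proof (rule ccontr)
  define K where "K = max M 0"
  assume "\<not> \<rho> (\<phi> x) \<le> max M 0 * \<rho> x"
  then have lt: "K * \<rho> x < \<rho> (\<phi> x)" by (simp add: K_def)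
  define c where "c = (K * \<rho> x + \<rho> (\<phi> x)) / 2"
  have "0 \<le> K * \<rho> x" using weight_pos[of x] by (simp add: K_def)
  then have c: "0 < c" "c < \<rho> (\<phi> x)" "K * \<rho> x < c" using lt by (auto simp: c_def)
  obtain f where f: "f \<in> Cb" "\<And>y. \<bar>f y\<bar> \<le> \<rho> y" "f (\<phi> x) = c"
    using Cb_dominated_value[OF c(1,2)] by blast
  have fB: "f \<in> Brho \<rho>" using Cb_subset_Brho f(1) by blast
  have "wnorm \<rho> f \<le> 1"
    using f(2) weight_pos by (intro wnorm_least) (simp add: divide_simps)
  then have "M * wnorm \<rho> f \<le> K"
    using wnorm_nonneg[OF fB] unfolding K_def
    by (cases "M \<ge> 0") (auto simp: mult_left_le mult_nonpos_nonneg)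
  moreover have "c / \<rho> x \<le> M * wnorm \<rho> f"
    using wnorm_upper[OF closed[OF fB], of x] bounded[OF fB] f(3) c(1) by simp
  ultimately have "c / \<rho> x \<le> K" by linarith
  then have "c \<le> K * \<rho> x" using weight_pos[of x] by (simp add: pos_divide_le_eq)
  then show False using c by linarith
qed

lemma weight_le_Cconst:
  "bdd_above (range (\<lambda>x. \<rho> (\<psi> t x) / \<rho> x)) \<Longrightarrow> \<rho> (\<psi> t x) \<le> Cconst \<rho> \<psi> t * \<rho> x"
  using cSUP_upper[of x UNIV "\<lambda>x. \<rho> (\<psi> t x) / \<rho> x"] weight_pos[of x]
  unfolding Cconst_def by (simp add: divide_simps)

lemma Cconst_le: "(\<And>x. \<rho> (\<psi> t x) \<le> K * \<rho> x) \<Longrightarrow> Cconst \<rho> \<psi> t \<le> K"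
  unfolding Cconst_def using weight_pos by (intro cSUP_least) (auto simp: divide_simps)

lemma flow_if_gen_feller_comp:
  assumes "gen_feller \<rho> (\<lambda>t f. f \<circ> \<psi> t)"
  shows "\<psi> 0 = id \<and>
           (\<forall>t1\<ge>0. \<forall>t2\<ge>0. \<psi> t1 \<circ> \<psi> t2 = \<psi> (t1 + t2)) \<and>
           (\<forall>x. ((\<lambda>t. \<psi> t x) \<longlongrightarrow> x) (at_right 0)) \<and>
           (\<forall>t\<ge>0. \<forall>R>0. continuous_on {x. \<rho> x \<le> R} (\<psi> t)) \<and>
           (\<forall>t\<ge>0. bdd_above (range (\<lambda>x. \<rho> (\<psi> t x) / \<rho> x))) \<and>
           (\<exists>\<delta>>0. \<exists>C>0. \<forall>t. 0 \<le> t \<and> t < \<delta> \<longrightarrow> Cconst \<rho> \<psi> t < C)"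
proof -
  have closed: "\<And>t f. t \<ge> 0 \<Longrightarrow> f \<in> Brho \<rho> \<Longrightarrow> f \<circ> \<psi> t \<in> Brho \<rho>"
    and bounded: "\<And>t. t \<ge> 0 \<Longrightarrow> \<exists>M. \<forall>f\<in>Brho \<rho>. wnorm \<rho> (f \<circ> \<psi> t) \<le> M * wnorm \<rho> f"
    and P1: "\<And>f. f \<in> Brho \<rho> \<Longrightarrow> f \<circ> \<psi> 0 = f"
    and P2: "\<And>s t f. s \<ge> 0 \<Longrightarrow> t \<ge> 0 \<Longrightarrow> f \<in> Brho \<rho> \<Longrightarrow> f \<circ> \<psi> (t + s) = f \<circ> \<psi> t \<circ> \<psi> s"
    and P3: "\<And>f x. f \<in> Brho \<rho> \<Longrightarrow> ((\<lambda>t. f (\<psi> t x)) \<longlongrightarrow> f x) (at_right 0)"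
    and P4: "\<exists>\<epsilon>>0. \<exists>C. \<forall>t\<in>{0..\<epsilon>}. \<forall>f\<in>Brho \<rho>. wnorm \<rho> (f \<circ> \<psi> t) \<le> C * wnorm \<rho> f"
    using assms unfolding gen_feller_def by (simp_all add: o_def)
  have growth: "\<rho> (\<psi> t x) \<le> max M 0 * \<rho> x"
    if "t \<ge> 0" "\<forall>f\<in>Brho \<rho>. wnorm \<rho> (f \<circ> \<psi> t) \<le> M * wnorm \<rho> f" for t M x
    using that closed by (intro weight_comp_le_of_bounded_comp) auto
  have "\<psi> 0 = id"
    using P1 Cb_subset_Brho by (intro eq_if_Cb_comp_eq) auto
  moreover have "\<psi> t1 \<circ> \<psi> t2 = \<psi> (t1 + t2)" if "t1 \<ge> 0" "t2 \<ge> 0" for t1 t2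
    using P2[OF that(2,1)] Cb_subset_Brho by (intro eq_if_Cb_comp_eq) (auto simp: comp_assoc)
  moreover have "((\<lambda>t. \<psi> t x) \<longlongrightarrow> x) (at_right 0)" for x
    using P3 Cb_subset_Brho by (intro tendsto_if_Cb_comp_tendsto) auto
  moreover have "continuous_on {x. \<rho> x \<le> R} (\<psi> t)" if "t \<ge> 0" for t R
    using Brho_continuous_on_sublevel closed[OF that] Cb_subset_Brho
    by (intro continuous_on_if_Cb_comp_continuous_on) blast
  moreover have "bdd_above (range (\<lambda>x. \<rho> (\<psi> t x) / \<rho> x))" if t: "t \<ge> 0" for t
  proof -
    obtain M where "\<forall>f\<in>Brho \<rho>. wnorm \<rho> (f \<circ> \<psi> t) \<le> M * wnorm \<rho> f"
      using bounded[OF t] by blast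
    then show ?thesis
      using growth[OF t] weight_pos by (intro bdd_aboveI[of _ "max M 0"]) (auto simp: divide_simps)
  qed
  moreover have "\<exists>\<delta>>0. \<exists>C>0. \<forall>t. 0 \<le> t \<and> t < \<delta> \<longrightarrow> Cconst \<rho> \<psi> t < C"
  proof -
    obtain \<epsilon> C where "\<epsilon> > 0" "\<forall>t\<in>{0..\<epsilon>}. \<forall>f\<in>Brho \<rho>. wnorm \<rho> (f \<circ> \<psi> t) \<le> C * wnorm \<rho> f"
      using P4 by blast
    then have "Cconst \<rho> \<psi> t < max C 0 + 1" if "0 \<le> t" "t < \<epsilon>" for t
      using that growth Cconst_le[of \<psi> t "max C 0"] by fastforce
    moreover have "max C 0 + 1 > 0" by simp
    ultimately show ?thesis using \<open>\<epsilon> > 0\<close> by blast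
  qed
  ultimately show ?thesis by blast
qed

lemma gen_feller_comp_if_flow:
  assumes "\<psi> 0 = id"
    and "\<forall>t1\<ge>0. \<forall>t2\<ge>0. \<psi> t1 \<circ> \<psi> t2 = \<psi> (t1 + t2)"
    and "\<forall>x. ((\<lambda>t. \<psi> t x) \<longlongrightarrow> x) (at_right 0)"
    and cont: "\<forall>t\<ge>0. \<forall>R>0. continuous_on {x. \<rho> x \<le> R} (\<psi> t)"
    and "\<forall>t\<ge>0. bdd_above (range (\<lambda>x. \<rho> (\<psi> t x) / \<rho> x))"
    and "\<exists>\<delta>>0. \<exists>C>0. \<forall>t. 0 \<le> t \<and> t < \<delta> \<longrightarrow> Cconst \<rho> \<psi> t < C"
  shows "gen_feller \<rho> (\<lambda>t f. f \<circ> \<psi> t)"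
proof -
  have growth: "\<rho> (\<psi> t x) \<le> Cconst \<rho> \<psi> t * \<rho> x" if "t \<ge> 0" for t x
    by (rule weight_le_Cconst) (use assms(5) that in simp)
  have closed: "f \<circ> \<psi> t \<in> Brho \<rho>" if t: "t \<ge> 0" and f: "f \<in> Brho \<rho>" for f t
    using cont t by (intro Brho_comp[OF _ growth[OF t] f]) simp
  have bounded: "wnorm \<rho> (f \<circ> \<psi> t) \<le> Cconst \<rho> \<psi> t * wnorm \<rho> f"
    if t: "t \<ge> 0" and f: "f \<in> Brho \<rho>" for f t
    by (rule wnorm_comp_le[OF growth[OF t] f])
  obtain \<delta> C where \<delta>C: "\<delta> > 0" "\<And>t. 0 \<le> t \<Longrightarrow> t < \<delta> \<Longrightarrow> Cconst \<rho> \<psi> t < C"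
    using assms(6) by blast
  have "wnorm \<rho> (f \<circ> \<psi> t) \<le> C * wnorm \<rho> f" if t: "t \<in> {0..\<delta>/2}" and f: "f \<in> Brho \<rho>" for t f
  proof -
    have "Cconst \<rho> \<psi> t \<le> C" using \<delta>C t by (simp add: less_imp_le)
    with bounded[of t f] t f wnorm_nonneg[OF f] show ?thesis
      by (meson atLeastAtMost_iff mult_right_mono order_trans)
  qed
  then have P4: "\<exists>\<epsilon>>0. \<exists>C. \<forall>t\<in>{0..\<epsilon>}. \<forall>f\<in>Brho \<rho>. wnorm \<rho> (f \<circ> \<psi> t) \<le> C * wnorm \<rho> f"
    using \<delta>C(1) half_gt_zero by blast
  have P3: "((\<lambda>t. f (\<psi> t x)) \<longlongrightarrow> f x) (at_right 0)" if "f \<in> Brho \<rho>" for f x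
  proof -
    define R where "R = max 1 C * \<rho> x"
    have x: "x \<in> {x. \<rho> x \<le> R}"
      using weight_pos[of x] by (auto simp: R_def mult_le_cancel_right1)
    have "\<forall>\<^sub>F t in at_right 0. 0 < t \<and> t < \<delta>"
      using eventually_at_right_real[OF \<delta>C(1)] by simp
    then have "\<forall>\<^sub>F t in at_right 0. \<psi> t x \<in> {x. \<rho> x \<le> R}"
    proof eventually_elim
      case (elim t)
      have "Cconst \<rho> \<psi> t * \<rho> x \<le> R"
        using \<delta>C(2)[of t] elim weight_pos[of x] unfolding R_def
        by (intro mult_right_mono) auto
      with growth[of t x] elim show ?case by simp
    qed
    with x show ?thesis
      by (intro continuous_on_tendsto_compose[OF Brho_continuous_on_sublevel[OF that]
            assms(3)[rule_format]])
  qed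
  show ?thesis
    unfolding gen_feller_def
  proof (intro conjI)
    show "\<forall>s\<ge>0. \<forall>t\<ge>0. \<forall>f\<in>Brho \<rho>. f \<circ> \<psi> (t + s) = f \<circ> \<psi> t \<circ> \<psi> s"
      using assms(2) by (simp add: comp_assoc)
    show "\<forall>f\<in>Brho \<rho>. \<forall>x. ((\<lambda>t. (f \<circ> \<psi> t) x) \<longlongrightarrow> f x) (at_right 0)"
      using P3 by simp
    show "\<forall>t\<ge>0. \<forall>f\<in>Brho \<rho>. f \<circ> \<psi> t \<in> Brho \<rho>"
      using closed by blast
    show "\<forall>t\<ge>0. \<exists>M. \<forall>f\<in>Brho \<rho>. wnorm \<rho> (f \<circ> \<psi> t) \<le> M * wnorm \<rho> f"
      using bounded by blast
    show "\<forall>f\<in>Brho \<rho>. f \<circ> \<psi> 0 = f"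
      using assms(1) by simp
  qed (use P4 in \<open>simp_all add: o_def\<close>)
qed

end

theorem mainTheorem15:
  fixes \<rho> :: "'a::topological_space \<Rightarrow> real"
    and \<psi> :: "real \<Rightarrow> 'a \<Rightarrow> 'a"
  assumes "completely_regular_space (euclidean :: 'a topology)"
    and "Hausdorff_space (euclidean :: 'a topology)"
    and "admissible_weight \<rho>"
  shows "(gen_feller \<rho> (\<lambda>t f. f \<circ> \<psi> t) \<longleftrightarrow>
           \<psi> 0 = id \<and>
           (\<forall>t1\<ge>0. \<forall>t2\<ge>0. \<psi> t1 \<circ> \<psi> t2 = \<psi> (t1 + t2)) \<and>
           (\<forall>x. ((\<lambda>t. \<psi> t x) \<longlongrightarrow> x) (at_right 0)) \<and>
           (\<forall>t\<ge>0. \<forall>R>0. continuous_on {x. \<rho> x \<le> R} (\<psi> t)) \<and>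
           (\<forall>t\<ge>0. bdd_above (range (\<lambda>x. \<rho> (\<psi> t x) / \<rho> x))) \<and>
           (\<exists>\<delta>>0. \<exists>C>0. \<forall>t. 0 \<le> t \<and> t < \<delta> \<longrightarrow> Cconst \<rho> \<psi> t < C))
         \<and> (gen_feller \<rho> (\<lambda>t f. f \<circ> \<psi> t) \<longrightarrow>
           (\<forall>t\<ge>0. \<forall>x. (SUP f\<in>{f\<in>Cb. \<forall>y. \<bar>f y\<bar> \<le> \<rho> y}. \<bar>f (\<psi> t x)\<bar>) = \<rho> (\<psi> t x)))"
proof -
  interpret weighted_space \<rho> using assms by unfold_locales
  show ?thesis
    apply (rule conjI[OF iffI])
      apply (erule flow_if_gen_feller_comp)
     apply (elim conjE)
     apply (rule gen_feller_comp_if_flow; assumption)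
    using SUP_dominated_Cb apply blast
    done
qed

end
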